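(* Let $Q=[(n_1,q_1),\dots,(n_m,q_m)]$ be a compatible pointed irregular type. Then a list $Q'=[(n'_1,q'_1),\dots,(n'_p,q'_p)]$ satisfies $Q'\sim Q$ if and only if $Q'$ is a compatible pointed irregular type whose labelled fission datum equals that of $Q$, i.e. $p=m$, $n'_i=n_i$ and $\mathrm{Levels}(q'_i)=\mathrm{Levels}(q_i)$ for all $i$, and $f_{q'_i,q'_j}=f_{q_i,q_j}$ for all $i\ne j$.
   Context: Exponential factors: finite sums $q=\sum_ka_kx^k$, $a_k\in\mathbb C$, $k\in\mathbb Q_{>0}$; $E(q)$ = set of exponents with $a_k\ne0$; $\mathrm{slope}(q)=\max E(q)$ ($0$ if $q=0$); $\mathrm{ram}(q)$ = least $r\ge1$ with $q\in x^{1/r}\mathbb C[x^{1/r}]$. Galois operator $\sigma(\sum a_kx^k)=\sum a_ke^{-2\pi\sqrt{-1}k}x^k$; Stokes circle $\langle q\rangle=\{\sigma^i(q)\}$. Truncation $\tau_k(\sum a_{k'}x^{k'})=\sum_{k'\ge k}a_{k'}x^{k'}$. $\mathrm{Levels}(q)=\{\mathrm{slope}(q-\sigma^i(q)):i\in\mathbb Z\}\setminus\{0\}$. Fission exponent: for $q,\hat q$ in distinct orbits, if some $k\in E(q)$ has $\langle\tau_k(q)\rangle=\langle\tau_k(\hat q)\rangle$, let $k$ be the smallest, $q_c=\tau_k(q)$, $\hat q_c=\tau_k(\hat q)$; else $q_c=\hat q_c=0$; $f_{q,\hat q}=\max(\mathrm{slope}(q-q_c),\mathrm{slope}(\hat q-\hat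 q_c))$. Pointed irregular type: $Q=[(n_1,q_1),\dots,(n_m,q_m)]$ with $n_i\in\mathbb N_{>0}$ and $q_i$ in pairwise distinct Galois orbits. $Q$ is compatible if for all $k\in\mathbb Q_{>0}$ and all $i,j$, $\langle\tau_k(q_i)\rangle=\langle\tau_k(q_j)\rangle$ implies $\tau_k(q_i)=\tau_k(q_j)$. Its labelled fission datum is the list $[(n_i,\mathrm{Levels}(q_i))]_{i=1}^m$ together with the numbers $f_{q_i,q_j}$ ($i\ne j$). For a list $Q'$ of pairs $(n'_i,q'_i)$ with $n'_i\in\mathbb N_{>0}$ and $q'_i$ exponential factors, $Q'\sim Q$ means $p=m$, $n'_i=n_i$, and $\mathrm{slope}(\sigma^k(q'_i)-\sigma^l(q'_j))=\mathrm{slope}(\sigma^k(q_i)-\sigma^l(q_j))$ for all $1\le i,j\le m$, $0\le k\le\mathrm{ram}(q_i)$, $0\le l\le\mathrm{ram}(q_j)$. *)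

theory Defs
  imports Complex_Main
begin

text \<open>An exponential factor \<open>q = \<Sum> a_k x^k\<close> is represented by its coefficient
  function \<open>rat \<Rightarrow> complex\<close> (k \<mapsto> a_k); it must have finite support contained in
  the positive rationals.\<close>

type_synonym expfac = "rat \<Rightarrow> complex"

definition is_expfac :: "expfac \<Rightarrow> bool" where
  "is_expfac q \<longleftrightarrow> finite {k. q k \<noteq> 0} \<and> (\<forall>k. q k \<noteq> 0 \<longrightarrow> k > 0)"

definition Exps :: "expfac \<Rightarrow> rat set" where
  "Exps q = {k. q k \<noteq> 0}"

definition slope :: "expfac \<Rightarrow> rat" where
  "slope q = (if Exps q = {} then 0 else Max (Exps q))"

definition ram :: "expfac \<Rightarrow> nat" where
  "ram q = (LEAST r::nat. r \<ge> 1 \<and> (\<forall>k \<in> Exps q. \<exists>j::int. k = of_int j / of_nat r))"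

text \<open>\<open>sigma_pow i\<close> is the i-th power (i integer) of the Galois operator
  \<open>\<sigma>(\<Sum> a_k x^k) = \<Sum> a_k e^{-2\<pi>\<surd>-1 k} x^k\<close>.\<close>

definition sigma_pow :: "int \<Rightarrow> expfac \<Rightarrow> expfac" where
  "sigma_pow i q = (\<lambda>k. cis (- 2 * pi * of_rat k * of_int i) * q k)"

definition stokes_circle :: "expfac \<Rightarrow> expfac set" where
  "stokes_circle q = {sigma_pow i q | i. True}"

definition trunc :: "rat \<Rightarrow> expfac \<Rightarrow> expfac" where
  "trunc k q = (\<lambda>k'. if k' \<ge> k then q k' else 0)"

definition Levels :: "expfac \<Rightarrow> rat set" where
  "Levels q = {slope (q - sigma_pow i q) | i. True} - {0}"

definition fission_exp :: "expfac \<Rightarrow> expfac \<Rightarrow> rat" where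
  "fission_exp q qh =
    (let K = {k \<in> Exps q. stokes_circle (trunc k q) = stokes_circle (trunc k qh)};
         qc = (if K = {} then (\<lambda>_. 0) else trunc (Min K) q);
         qhc = (if K = {} then (\<lambda>_. 0) else trunc (Min K) qh)
     in max (slope (q - qc)) (slope (qh - qhc)))"

text \<open>Pointed irregular types as lists of pairs (0-based indexing).\<close>

definition pointed_irr_type :: "(nat \<times> expfac) list \<Rightarrow> bool" where
  "pointed_irr_type Q \<longleftrightarrow>
     (\<forall>i < length Q. fst (Q ! i) > 0 \<and> is_expfac (snd (Q ! i))) \<and>
     (\<forall>i < length Q. \<forall>j < length Q. i \<noteq> j \<longrightarrow>
        stokes_circle (snd (Q ! i)) \<noteq> stokes_circle (snd (Q ! j)))"

definition compatible :: "(nat \<times> expfac) list \<Rightarrow> bool" where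
  "compatible Q \<longleftrightarrow>
     (\<forall>k::rat. k > 0 \<longrightarrow> (\<forall>i < length Q. \<forall>j < length Q.
        stokes_circle (trunc k (snd (Q ! i))) = stokes_circle (trunc k (snd (Q ! j))) \<longrightarrow>
        trunc k (snd (Q ! i)) = trunc k (snd (Q ! j))))"

definition same_fission_datum :: "(nat \<times> expfac) list \<Rightarrow> (nat \<times> expfac) list \<Rightarrow> bool" where
  "same_fission_datum Q' Q \<longleftrightarrow>
     length Q' = length Q \<and>
     (\<forall>i < length Q. fst (Q' ! i) = fst (Q ! i) \<and>
        Levels (snd (Q' ! i)) = Levels (snd (Q ! i))) \<and>
     (\<forall>i < length Q. \<forall>j < length Q. i \<noteq> j \<longrightarrow>
        fission_exp (snd (Q' ! i)) (snd (Q' ! j)) = fission_exp (snd (Q ! i)) (snd (Q ! j)))"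

definition sim_irr :: "(nat \<times> expfac) list \<Rightarrow> (nat \<times> expfac) list \<Rightarrow> bool" where
  "sim_irr Q' Q \<longleftrightarrow>
     length Q' = length Q \<and>
     (\<forall>i < length Q. fst (Q' ! i) = fst (Q ! i)) \<and>
     (\<forall>i < length Q. \<forall>j < length Q.
        \<forall>k::nat \<le> ram (snd (Q ! i)). \<forall>l::nat \<le> ram (snd (Q ! j)).
          slope (sigma_pow (int k) (snd (Q' ! i)) - sigma_pow (int l) (snd (Q' ! j))) =
          slope (sigma_pow (int k) (snd (Q ! i)) - sigma_pow (int l) (snd (Q ! j))))"

end

theory Submission
  imports Defs
begin

text \<open>Everything is governed by the slopes of the differences \<open>\<sigma>^m q_i - q_j\<close>.
  Stokes circles of truncations, compatibility, levels and fission exponents are all read off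
  from them, and \<open>\<sigma>^{ram q} q = q\<close> reduces the twists \<open>0 \<le> k \<le> ram q_i\<close> tested by
  \<open>\<sim>\<close> to all \<open>m \<in> \<int>\<close>. Conversely, for a compatible pair \<open>(a, b)\<close> there is no cancellation
  between the leading terms of \<open>\<sigma>^m a - a\<close> and \<open>a - b\<close>, so
  \<open>slope (\<sigma>^m a - b) = max (slope (a - \<sigma>^m a)) (slope (a - b))\<close>, where the first slope
  is determined by \<open>Levels a\<close> and the second is the fission exponent \<open>f_{a,b}\<close>.\<close>

lemma sigma_pow_add: "sigma_pow a (sigma_pow b q) = sigma_pow (a + b) q"
proof
  fix k
  have "cis (- 2 * pi * of_rat k * of_int a) * cis (- 2 * pi * of_rat k * of_int b) =
        cis (- 2 * pi * of_rat k * of_int (a + b))"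
    by (simp add: cis_mult algebra_simps)
  then show "sigma_pow a (sigma_pow b q) k = sigma_pow (a + b) q k"
    unfolding sigma_pow_def by (metis mult.assoc)
qed

lemma sigma_pow_0 [simp]: "sigma_pow 0 q = q"
  by (simp add: sigma_pow_def)

lemma sigma_pow_diff: "sigma_pow d (x - y) = sigma_pow d x - sigma_pow d y"
  by (rule ext) (simp add: sigma_pow_def algebra_simps)

lemma Exps_sigma_pow [simp]: "Exps (sigma_pow d q) = Exps q"
  by (simp add: Exps_def sigma_pow_def)

lemma slope_sigma_pow [simp]: "slope (sigma_pow d q) = slope q"
  by (simp add: slope_def)

lemma trunc_sigma_pow: "trunc t (sigma_pow d q) = sigma_pow d (trunc t q)"
  by (rule ext) (simp add: trunc_def sigma_pow_def)

lemma stokes_circle_eq_iff: "stokes_circle a = stokes_circle b \<longleftrightarrow> (\<exists>m. b = sigma_pow m a)"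
proof
  assume "stokes_circle a = stokes_circle b"
  moreover have "b \<in> stokes_circle b"
    unfolding stokes_circle_def by (metis (mono_tags) mem_Collect_eq sigma_pow_0)
  ultimately show "\<exists>m. b = sigma_pow m a"
    unfolding stokes_circle_def by auto
next
  assume "\<exists>m. b = sigma_pow m a"
  then obtain m where "b = sigma_pow m a" ..
  then show "stokes_circle a = stokes_circle b"
    unfolding stokes_circle_def
    by (auto simp: sigma_pow_add) (metis add.commute diff_add_cancel sigma_pow_add)
qed

lemma is_expfac_diff: "is_expfac x \<Longrightarrow> is_expfac y \<Longrightarrow> is_expfac (x - y)"
  unfolding is_expfac_def
  by (rule conjI, rule finite_subset[of _ "{k. x k \<noteq> 0} \<union> {k. y k \<noteq> 0}"]) (auto, metis)

lemma is_expfac_sigma_pow: "is_expfac x \<Longrightarrow> is_expfac (sigma_pow d x)"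
  by (simp add: is_expfac_def sigma_pow_def)

lemma is_expfac_trunc: "is_expfac x \<Longrightarrow> is_expfac (trunc t x)"
  unfolding is_expfac_def trunc_def
  by (rule conjI, rule finite_subset[of _ "{k. x k \<noteq> 0}"]) auto

lemma slope_diff_commute: "slope (x - y) = slope (y - x)"
proof -
  have "Exps (x - y) = Exps (y - x)"
    unfolding Exps_def by (metis right_minus_eq minus_apply)
  then show ?thesis
    by (simp add: slope_def)
qed

lemma slope_self_diff [simp]: "slope (x - x) = 0"
  by (simp add: slope_def Exps_def)

lemma
  assumes "is_expfac x"
  shows le_slope: "x k \<noteq> 0 \<Longrightarrow> k \<le> slope x"
    and coeff_slope_nonzero: "x \<noteq> (\<lambda>_. 0) \<Longrightarrow> x (slope x) \<noteq> 0"
proof -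
  have fin: "finite (Exps x)"
    using assms by (simp add: is_expfac_def Exps_def)
  show "x k \<noteq> 0 \<Longrightarrow> k \<le> slope x"
    using fin by (auto simp: slope_def Exps_def)
  assume "x \<noteq> (\<lambda>_. 0)"
  then have "Exps x \<noteq> {}"
    by (auto simp: Exps_def)
  with Max_in[OF fin this] show "x (slope x) \<noteq> 0"
    by (simp add: slope_def Exps_def)
qed

lemma coeff_slope_nonzero_if_slope_nonzero:
  assumes "is_expfac x" "slope x \<noteq> 0"
  shows "x (slope x) \<noteq> 0"
proof -
  have "x \<noteq> (\<lambda>_. 0)"
    using assms(2) by (auto simp: slope_def Exps_def)
  then show ?thesis
    by (rule coeff_slope_nonzero[OF assms(1)])
qed

lemma slope_nonneg:
  assumes x: "is_expfac x"
  shows "0 \<le> slope x"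
proof (cases "x = (\<lambda>_. 0)")
  case True
  then show ?thesis by (simp add: slope_def Exps_def)
next
  case False
  then have "x (slope x) \<noteq> 0" by (rule coeff_slope_nonzero[OF x])
  with x show ?thesis by (auto simp: is_expfac_def)
qed

lemma slope_le_iff:
  assumes x: "is_expfac x" and "0 \<le> t"
  shows "slope x \<le> t \<longleftrightarrow> (\<forall>k>t. x k = 0)"
proof
  show "slope x \<le> t \<Longrightarrow> \<forall>k>t. x k = 0"
    using le_slope[OF x] by (meson leD order.trans)
  assume vanish: "\<forall>k>t. x k = 0"
  show "slope x \<le> t"
  proof (cases "x = (\<lambda>_. 0)")
    case True
    then show ?thesis using \<open>0 \<le> t\<close> by (simp add: slope_def Exps_def)
  next
    case False
    then have "x (slope x) \<noteq> 0" by (rule coeff_slope_nonzero[OF x])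
    with vanish show ?thesis by (metis not_less)
  qed
qed

lemma slope_less_iff:
  assumes x: "is_expfac x" and "0 < t"
  shows "slope x < t \<longleftrightarrow> (\<forall>k\<ge>t. x k = 0)"
proof
  show "slope x < t \<Longrightarrow> \<forall>k\<ge>t. x k = 0"
    using le_slope[OF x] by (meson leD order.strict_trans1)
  assume vanish: "\<forall>k\<ge>t. x k = 0"
  show "slope x < t"
  proof (cases "x = (\<lambda>_. 0)")
    case True
    then show ?thesis using \<open>0 < t\<close> by (simp add: slope_def Exps_def)
  next
    case False
    then have "x (slope x) \<noteq> 0" by (rule coeff_slope_nonzero[OF x])
    with vanish show ?thesis by (metis not_less)
  qed
qed

lemma slope_eq_0_iff:
  assumes x: "is_expfac x"
  shows "slope x = 0 \<longleftrightarrow> x = (\<lambda>_. 0)"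
proof -
  have "slope x = 0 \<longleftrightarrow> slope x \<le> 0"
    using slope_nonneg[OF x] by linarith
  also have "\<dots> \<longleftrightarrow> (\<forall>k>0. x k = 0)"
    using slope_le_iff[OF x] by simp
  also have "\<dots> \<longleftrightarrow> x = (\<lambda>_. 0)"
    using x unfolding is_expfac_def by (metis less_irrefl)
  finally show ?thesis .
qed

lemma slope_diff_le_max:
  assumes "is_expfac x" "is_expfac y" "is_expfac z"
  shows "slope (x - z) \<le> max (slope (x - y)) (slope (y - z))"
proof -
  let ?t = "max (slope (x - y)) (slope (y - z))"
  have xy: "is_expfac (x - y)" and yz: "is_expfac (y - z)" and xz: "is_expfac (x - z)"
    using assms by (auto intro: is_expfac_diff)
  have t: "0 \<le> ?t"
    using slope_nonneg[OF xy] by linarith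
  have "\<forall>k>?t. (x - y) k = 0" "\<forall>k>?t. (y - z) k = 0"
    using slope_le_iff[OF xy t] slope_le_iff[OF yz t] by auto
  then have "\<forall>k>?t. (x - z) k = 0"
    by simp
  then show ?thesis
    using slope_le_iff[OF xz t] by blast
qed

lemma eq_if_same_positive_strict_upper_bounds:
  fixes x y :: "'a::{linorder, zero}"
  assumes "0 \<le> x" "0 \<le> y" and "\<And>t. 0 < t \<Longrightarrow> x < t \<longleftrightarrow> y < t"
  shows "x = y"
proof (rule linorder_cases[of x y])
  assume "x < y"
  with assms(1) have "0 < y" by (rule order.strict_trans1)
  with \<open>x < y\<close> show ?thesis using assms(3)[of y] by simp
next
  assume "y < x"
  with assms(2) have "0 < x" by (rule order.strict_trans1)
  with \<open>y < x\<close> show ?thesis using assms(3)[of x] by simp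
qed

lemma trunc_eq_iff_slope_less:
  assumes "is_expfac a" "is_expfac b" "0 < t"
  shows "trunc t a = trunc t b \<longleftrightarrow> slope (a - b) < t"
proof -
  have "trunc t a = trunc t b \<longleftrightarrow> (\<forall>k\<ge>t. (a - b) k = 0)"
    unfolding trunc_def fun_eq_iff by (metis minus_apply right_minus_eq)
  also have "\<dots> \<longleftrightarrow> slope (a - b) < t"
    using slope_less_iff[OF is_expfac_diff[OF assms(1,2)] assms(3)] by blast
  finally show ?thesis .
qed

lemma slope_sigma_pow_shift: "slope (sigma_pow k a - sigma_pow l b) = slope (sigma_pow (k - l) a - b)"
proof -
  have "sigma_pow k a - sigma_pow l b = sigma_pow l (sigma_pow (k - l) a - b)"
    by (simp add: sigma_pow_diff sigma_pow_add)
  then show ?thesis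
    by simp
qed

lemma fun_diff_eq_0_iff: "x - y = (\<lambda>_. 0::'a::ab_group_add) \<longleftrightarrow> x = y"
  by (simp add: fun_eq_iff)

lemma stokes_circle_eq_iff_slope:
  assumes "is_expfac a" "is_expfac b"
  shows "stokes_circle a = stokes_circle b \<longleftrightarrow> (\<exists>m. slope (sigma_pow m a - b) = 0)"
proof -
  have "\<And>m. b = sigma_pow m a \<longleftrightarrow> slope (sigma_pow m a - b) = 0"
    using slope_eq_0_iff[OF is_expfac_diff[OF is_expfac_sigma_pow[OF assms(1)] assms(2)]]
    by (auto simp: fun_diff_eq_0_iff)
  then show ?thesis
    by (simp add: stokes_circle_eq_iff)
qed

lemma stokes_circle_trunc_eq_iff:
  assumes "is_expfac a" "is_expfac b" "0 < t"
  shows "stokes_circle (trunc t a) = stokes_circle (trunc t b) \<longleftrightarrow>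
    (\<exists>m. slope (sigma_pow m a - b) < t)"
proof -
  have "\<And>m. trunc t b = sigma_pow m (trunc t a) \<longleftrightarrow> slope (sigma_pow m a - b) < t"
    using trunc_eq_iff_slope_less[OF is_expfac_sigma_pow[OF assms(1)] assms(2,3)]
    by (metis trunc_sigma_pow)
  then show ?thesis
    by (simp add: stokes_circle_eq_iff)
qed

definition compatible_pair :: "expfac \<Rightarrow> expfac \<Rightarrow> bool" where
  "compatible_pair a b \<longleftrightarrow>
     (\<forall>t>0. stokes_circle (trunc t a) = stokes_circle (trunc t b) \<longrightarrow> trunc t a = trunc t b)"

lemma compatible_iff_compatible_pair:
  "compatible Q \<longleftrightarrow>
     (\<forall>i < length Q. \<forall>j < length Q. compatible_pair (snd (Q ! i)) (snd (Q ! j)))"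
  unfolding compatible_def compatible_pair_def by blast

lemma compatible_pair_iff_slope:
  assumes "is_expfac a" "is_expfac b"
  shows "compatible_pair a b \<longleftrightarrow>
    (\<forall>t>0. (\<exists>m. slope (sigma_pow m a - b) < t) \<longrightarrow> slope (a - b) < t)"
  using stokes_circle_trunc_eq_iff[OF assms] trunc_eq_iff_slope_less[OF assms]
  by (simp add: compatible_pair_def)

lemma slope_diff_le_slope_sigma_pow_diff:
  assumes "is_expfac a" "is_expfac b" "compatible_pair a b"
  shows "slope (a - b) \<le> slope (sigma_pow m a - b)"
proof (rule ccontr)
  assume "\<not> ?thesis"
  then have "slope (sigma_pow m a - b) < slope (a - b)" and "0 < slope (a - b)"
    using slope_nonneg[OF is_expfac_diff[OF is_expfac_sigma_pow[OF assms(1)] assms(2)], of m]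
    by linarith+
  with assms show False
    unfolding compatible_pair_iff_slope[OF assms(1,2)] by blast
qed

lemma slope_sigma_pow_diff_compatible:
  assumes a: "is_expfac a" and b: "is_expfac b" and "compatible_pair a b"
  shows "slope (sigma_pow m a - b) = max (slope (a - sigma_pow m a)) (slope (a - b))"
proof (rule antisym)
  have a': "is_expfac (sigma_pow m a)"
    using a by (rule is_expfac_sigma_pow)
  have D: "slope (a - b) \<le> slope (sigma_pow m a - b)"
    using slope_diff_le_slope_sigma_pow_diff[OF assms] .
  have "slope (sigma_pow m a - b) \<le> max (slope (sigma_pow m a - a)) (slope (a - b))"
    using slope_diff_le_max[OF a' a b] .
  then show "slope (sigma_pow m a - b) \<le> max (slope (a - sigma_pow m a)) (slope (a - b))"
    by (simp add: slope_diff_commute)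
  have "slope (sigma_pow m a - a) \<le> max (slope (sigma_pow m a - b)) (slope (b - a))"
    using slope_diff_le_max[OF a' b a] .
  with D show "max (slope (a - sigma_pow m a)) (slope (a - b)) \<le> slope (sigma_pow m a - b)"
    by (simp add: slope_diff_commute)
qed

lemma trunc_eq_0_if_slope_less:
  assumes "is_expfac x" "slope x < t"
  shows "trunc t x = (\<lambda>_. 0)"
proof -
  have "0 < t"
    using slope_nonneg[OF assms(1)] assms(2) by linarith
  with assms have "\<forall>k\<ge>t. x k = 0"
    using slope_less_iff by blast
  then show ?thesis
    by (auto simp: trunc_def)
qed

lemma max_slope_diff_trunc:
  assumes a: "is_expfac a" and b: "is_expfac b" and "slope (a - b) < m"
    and gap: "\<And>k. slope (a - b) < k \<Longrightarrow> k < m \<Longrightarrow> a k = 0"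
  shows "max (slope (a - trunc m a)) (slope (b - trunc m b)) = slope (a - b)"
proof (rule eq_if_same_positive_strict_upper_bounds)
  have ab: "is_expfac (a - b)" and a': "is_expfac (a - trunc m a)" and b': "is_expfac (b - trunc m b)"
    using a b by (auto intro: is_expfac_diff is_expfac_trunc)
  have agree: "\<And>k. slope (a - b) < k \<Longrightarrow> a k = b k"
    using slope_le_iff[OF ab slope_nonneg[OF ab]] by simp
  show "0 \<le> max (slope (a - trunc m a)) (slope (b - trunc m b))"
    using slope_nonneg[OF a'] by linarith
  show "0 \<le> slope (a - b)"
    using slope_nonneg[OF ab] .
  fix t :: rat
  assume t: "0 < t"
  have lower: "max (slope (a - trunc m a)) (slope (b - trunc m b)) < t \<longleftrightarrow>
      (\<forall>k\<ge>t. k < m \<longrightarrow> a k = 0 \<and> b k = 0)"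
    using slope_less_iff[OF a' t] slope_less_iff[OF b' t] by (auto simp: trunc_def)
  have diff: "slope (a - b) < t \<longleftrightarrow> (\<forall>k\<ge>t. a k = b k)"
    using slope_less_iff[OF ab t] by simp
  show "max (slope (a - trunc m a)) (slope (b - trunc m b)) < t \<longleftrightarrow> slope (a - b) < t"
  proof
    assume "max (slope (a - trunc m a)) (slope (b - trunc m b)) < t"
    then have "\<forall>k\<ge>t. k < m \<longrightarrow> a k = 0 \<and> b k = 0"
      using lower by blast
    moreover have "\<forall>k\<ge>m. a k = b k"
      using agree \<open>slope (a - b) < m\<close> by fastforce
    ultimately show "slope (a - b) < t"
      using diff by (metis not_less)
  next
    assume "slope (a - b) < t"
    then have "\<forall>k\<ge>t. k < m \<longrightarrow> a k = 0 \<and> b k = 0"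
      using gap agree by fastforce
    then show "max (slope (a - trunc m a)) (slope (b - trunc m b)) < t"
      using lower by blast
  qed
qed

text \<open>For a compatible pair, \<open>\<langle>\<tau>_k(a)\<rangle> = \<langle>\<tau>_k(b)\<rangle>\<close> holds exactly when
  \<open>k > slope (a - b)\<close>, so the common part is cut off just above \<open>slope (a - b)\<close>.
  No hypothesis on the orbits is needed: compatibility forces \<open>a = b\<close> when \<open>\<langle>a\<rangle> = \<langle>b\<rangle>\<close>.\<close>

lemma fission_exp_compatible:
  assumes a: "is_expfac a" and b: "is_expfac b" and ab: "compatible_pair a b"
  shows "fission_exp a b = slope (a - b)"
proof -
  define K where "K = {k \<in> Exps a. stokes_circle (trunc k a) = stokes_circle (trunc k b)}"
  have K: "K = {k \<in> Exps a. slope (a - b) < k}"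
  proof -
    have "stokes_circle (trunc k a) = stokes_circle (trunc k b) \<longleftrightarrow> slope (a - b) < k"
      if "k \<in> Exps a" for k
    proof -
      have "0 < k"
        using that a by (simp add: Exps_def is_expfac_def)
      then have "stokes_circle (trunc k a) = stokes_circle (trunc k b) \<longrightarrow> trunc k a = trunc k b"
        using ab unfolding compatible_pair_def by blast
      with trunc_eq_iff_slope_less[OF a b \<open>0 < k\<close>] show ?thesis
        by auto
    qed
    then show ?thesis
      unfolding K_def by blast
  qed
  have finK: "finite K"
    using a by (simp add: K_def Exps_def is_expfac_def)
  obtain m where m: "slope (a - b) < m" and gap: "\<And>k. slope (a - b) < k \<Longrightarrow> k < m \<Longrightarrow> a k = 0"
    and "fission_exp a b = max (slope (a - trunc m a)) (slope (b - trunc m b))"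
  proof (cases "K = {}")
    case True
    \<comment> \<open>any \<open>m\<close> above both slopes makes the truncations vanish, matching \<open>q_c = 0\<close>\<close>
    define m where "m = slope a + slope b + slope (a - b) + 1"
    have "slope a < m" "slope b < m" "slope (a - b) < m"
      using slope_nonneg[OF a] slope_nonneg[OF b] slope_nonneg[OF is_expfac_diff[OF a b]]
      unfolding m_def by linarith+
    then have "trunc m a = (\<lambda>_. 0)" "trunc m b = (\<lambda>_. 0)"
      using trunc_eq_0_if_slope_less a b by blast+
    then have "fission_exp a b = max (slope (a - trunc m a)) (slope (b - trunc m b))"
      unfolding fission_exp_def Let_def K_def[symmetric] using True by simp
    moreover have "a k = 0" if "slope (a - b) < k" for k
      using True that unfolding K by (auto simp: Exps_def)
    ultimately show ?thesis
      using that \<open>slope (a - b) < m\<close> by blast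
  next
    case False
    define m where "m = Min K"
    have "m \<in> K"
      unfolding m_def using finK False by (rule Min_in)
    moreover have "a k = 0" if "slope (a - b) < k" "k < m" for k
      using that Min_le[OF finK] unfolding m_def K by (force simp: Exps_def)
    moreover have "fission_exp a b = max (slope (a - trunc m a)) (slope (b - trunc m b))"
      unfolding fission_exp_def Let_def K_def[symmetric] m_def using False by simp
    ultimately show ?thesis
      using that unfolding K by blast
  qed
  then show ?thesis
    using max_slope_diff_trunc[OF a b m gap] by simp
qed

lemma diff_sigma_pow_apply:
  "(q - sigma_pow d q) k = (1 - cis (- 2 * pi * of_rat k * of_int d)) * q k"
  by (simp add: sigma_pow_def algebra_simps)

lemma slope_diff_sigma_pow_le_if_Levels_subset:
  assumes q: "is_expfac q" and q': "is_expfac q'" and sub: "Levels q \<subseteq> Levels q'"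
  shows "slope (q - sigma_pow d q) \<le> slope (q' - sigma_pow d q')"
proof (cases "slope (q - sigma_pow d q) = 0")
  case True
  then show ?thesis
    using slope_nonneg[OF is_expfac_diff[OF q' is_expfac_sigma_pow[OF q']]] by simp
next
  case False
  define s where "s = slope (q - sigma_pow d q)"
  have "s \<in> Levels q'"
    using sub False unfolding s_def Levels_def by blast
  then obtain i where "s = slope (q' - sigma_pow i q')" and "s \<noteq> 0"
    unfolding Levels_def by blast
  then have "(q' - sigma_pow i q') s \<noteq> 0"
    using coeff_slope_nonzero_if_slope_nonzero[OF is_expfac_diff[OF q' is_expfac_sigma_pow[OF q']]]
    by simp
  then have "q' s \<noteq> 0"
    by (metis diff_sigma_pow_apply mult_eq_0_iff)
  moreover have "(q - sigma_pow d q) s \<noteq> 0"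
    using False coeff_slope_nonzero_if_slope_nonzero[OF is_expfac_diff[OF q is_expfac_sigma_pow[OF q]]]
    unfolding s_def by simp
  ultimately have "(q' - sigma_pow d q') s \<noteq> 0"
    by (metis diff_sigma_pow_apply mult_eq_0_iff)
  then show ?thesis
    unfolding s_def[symmetric] by (rule le_slope[OF is_expfac_diff[OF q' is_expfac_sigma_pow[OF q']]])
qed

lemma slope_diff_sigma_pow_eq_if_Levels_eq:
  assumes "is_expfac q" "is_expfac q'" "Levels q = Levels q'"
  shows "slope (q - sigma_pow d q) = slope (q' - sigma_pow d q')"
  using slope_diff_sigma_pow_le_if_Levels_subset[OF assms(1,2)]
    slope_diff_sigma_pow_le_if_Levels_subset[OF assms(2,1)] assms(3)
  by (simp add: antisym)

lemma common_denominator_exists: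
  assumes "is_expfac q"
  shows "\<exists>r::nat. r \<ge> 1 \<and> (\<forall>k \<in> Exps q. \<exists>j::int. k = of_int j / of_nat r)"
proof -
  have fin: "finite (Exps q)"
    using assms by (simp add: is_expfac_def Exps_def)
  define den where "den k = nat (snd (quotient_of k))" for k :: rat
  have den_pos: "den k \<ge> 1" for k
    using quotient_of_denom_pos' by (simp add: den_def Suc_le_eq)
  define r where "r = (\<Prod>k\<in>Exps q. den k)"
  have "\<exists>j::int. k = of_int j / of_nat r" if k: "k \<in> Exps q" for k
  proof -
    obtain a b where ab: "quotient_of k = (a, b)"
      by (cases "quotient_of k")
    define c where "c = (\<Prod>l\<in>Exps q - {k}. den l)"
    have "r = nat b * c"
      unfolding r_def c_def using prod.remove[OF fin k, of den] ab by (simp add: den_def)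
    moreover have "c \<ge> 1"
      unfolding c_def by (rule prod_ge_1) (rule den_pos)
    ultimately have "k = of_int (a * int c) / of_nat r"
      using quotient_of_denom_pos[OF ab] by (simp add: quotient_of_div[OF ab])
    then show ?thesis ..
  qed
  moreover have "r \<ge> 1"
    unfolding r_def by (rule prod_ge_1) (rule den_pos)
  ultimately show ?thesis
    by blast
qed

lemma ram_common_denominator:
  assumes "is_expfac q"
  shows "ram q \<ge> 1 \<and> (\<forall>k \<in> Exps q. \<exists>j::int. k = of_int j / of_nat (ram q))"
  unfolding ram_def using LeastI_ex[OF common_denominator_exists[OF assms]] .

lemma sigma_pow_ram:
  assumes q: "is_expfac q"
  shows "sigma_pow (int (ram q)) q = q"
proof
  fix k
  show "sigma_pow (int (ram q)) q k = q k"
  proof (cases "q k = 0")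
    case True
    then show ?thesis by (simp add: sigma_pow_def)
  next
    case False
    then obtain j where "k = of_int j / of_nat (ram q)" and "ram q \<ge> 1"
      using ram_common_denominator[OF q] by (auto simp: Exps_def)
    then have "of_rat k * real (ram q) = real_of_int j"
      by (simp add: of_rat_divide)
    then have "- 2 * pi * of_rat k * of_int (int (ram q)) = 2 * pi * real_of_int (- j)"
      by (simp add: algebra_simps)
    moreover have "cis (2 * pi * real_of_int (- j)) = 1"
      by (rule cis_multiple_2pi) simp
    ultimately have "cis (- 2 * pi * of_rat k * of_int (int (ram q))) = 1"
      by metis
    then show ?thesis
      by (simp add: sigma_pow_def)
  qed
qed

lemma sigma_pow_mult_period:
  assumes "sigma_pow r q = q"
  shows "sigma_pow (c * r) q = q"
proof (induction c rule: int_induct[where k = 0])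
  case base
  then show ?case by simp
next
  case (step1 c)
  have "sigma_pow ((c + 1) * r) q = sigma_pow (c * r) (sigma_pow r q)"
    by (simp add: sigma_pow_add algebra_simps)
  then show ?case
    using step1 assms by simp
next
  case (step2 c)
  have "sigma_pow ((c - 1) * r) q = sigma_pow (- r) (sigma_pow (c * r) q)"
    by (simp add: sigma_pow_add algebra_simps)
  also have "\<dots> = sigma_pow (- r) (sigma_pow r q)"
    using step2 assms by simp
  also have "\<dots> = q"
    by (simp add: sigma_pow_add)
  finally show ?case .
qed

lemma sigma_pow_mod_period:
  assumes "sigma_pow r q = q"
  shows "sigma_pow d q = sigma_pow (d mod r) q"
proof -
  have "sigma_pow d q = sigma_pow (d mod r) (sigma_pow (d div r * r) q)"
    by (simp add: sigma_pow_add)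
  then show ?thesis
    using sigma_pow_mult_period[OF assms] by simp
qed

lemma slope_sigma_pow_diff_eq_if_periodic:
  assumes "sigma_pow (int r) a = a" "sigma_pow (int r) a' = a'" "0 < r"
    and "\<And>k. k \<le> r \<Longrightarrow> slope (sigma_pow (int k) a' - b') = slope (sigma_pow (int k) a - b)"
  shows "slope (sigma_pow m a' - b') = slope (sigma_pow m a - b)"
proof -
  define k where "k = nat (m mod int r)"
  have "0 \<le> m mod int r" "m mod int r < int r"
    using \<open>0 < r\<close> by simp_all
  then have "int k = m mod int r" and "k \<le> r"
    unfolding k_def by linarith+
  then show ?thesis
    using assms(4)[of k] sigma_pow_mod_period[OF assms(1), of m] sigma_pow_mod_period[OF assms(2), of m]
    by simp
qed

definition same_twisted_slopes :: "(nat \<times> expfac) list \<Rightarrow> (nat \<times> expfac) list \<Rightarrow> bool" where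
  "same_twisted_slopes Q' Q \<longleftrightarrow>
     length Q' = length Q \<and>
     (\<forall>i < length Q. \<forall>j < length Q. \<forall>m.
        slope (sigma_pow m (snd (Q' ! i)) - snd (Q' ! j)) = slope (sigma_pow m (snd (Q ! i)) - snd (Q ! j)))"

lemma pointed_irr_type_is_expfac: "pointed_irr_type Q \<Longrightarrow> i < length Q \<Longrightarrow> is_expfac (snd (Q ! i))"
  by (simp add: pointed_irr_type_def)

lemma compatible_compatible_pair:
  "compatible Q \<Longrightarrow> i < length Q \<Longrightarrow> j < length Q \<Longrightarrow> compatible_pair (snd (Q ! i)) (snd (Q ! j))"
  by (simp add: compatible_iff_compatible_pair)

lemma sim_irr_if_same_twisted_slopes:
  assumes "same_twisted_slopes Q' Q" and "\<forall>i < length Q. fst (Q' ! i) = fst (Q ! i)"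
  shows "sim_irr Q' Q"
  using assms by (simp add: sim_irr_def same_twisted_slopes_def slope_sigma_pow_shift)

lemma same_twisted_slopes_if_sim_irr:
  assumes sim: "sim_irr Q' Q"
    and Q: "\<forall>i < length Q. is_expfac (snd (Q ! i))" and Q': "\<forall>i < length Q'. is_expfac (snd (Q' ! i))"
  shows "same_twisted_slopes Q' Q"
  unfolding same_twisted_slopes_def
proof (intro conjI allI impI)
  show len: "length Q' = length Q"
    using sim by (simp add: sim_irr_def)
  fix i j m
  assume i: "i < length Q" and j: "j < length Q"
  define r where "r = ram (snd (Q ! i))"
  have twists: "slope (sigma_pow (int k) (snd (Q' ! i)) - snd (Q' ! j')) =
      slope (sigma_pow (int k) (snd (Q ! i)) - snd (Q ! j'))" if "j' < length Q" "k \<le> r" for j' k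
    using sim i that unfolding sim_irr_def r_def by (metis le0 of_nat_0 sigma_pow_0)
  have period: "sigma_pow (int r) (snd (Q ! i)) = snd (Q ! i)"
    unfolding r_def using Q i by (simp add: sigma_pow_ram)
  then have "slope (sigma_pow (int r) (snd (Q' ! i)) - snd (Q' ! i)) = 0"
    using twists[OF i order.refl] by simp
  then have period': "sigma_pow (int r) (snd (Q' ! i)) = snd (Q' ! i)"
    using slope_eq_0_iff[OF is_expfac_diff[OF is_expfac_sigma_pow]] Q' i len
    by (simp add: fun_diff_eq_0_iff)
  have "0 < r"
    using ram_common_denominator Q i unfolding r_def by fastforce
  then show "slope (sigma_pow m (snd (Q' ! i)) - snd (Q' ! j)) =
      slope (sigma_pow m (snd (Q ! i)) - snd (Q ! j))"
    using slope_sigma_pow_diff_eq_if_periodic[OF period period'] twists[OF j] by blast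
qed

lemma pointed_irr_type_if_same_twisted_slopes:
  assumes tw: "same_twisted_slopes Q' Q" and Q: "pointed_irr_type Q"
    and Q': "\<forall>i < length Q'. fst (Q' ! i) > 0 \<and> is_expfac (snd (Q' ! i))"
  shows "pointed_irr_type Q'"
proof -
  have len: "length Q' = length Q"
    using tw by (simp add: same_twisted_slopes_def)
  have "stokes_circle (snd (Q' ! i)) = stokes_circle (snd (Q' ! j)) \<longleftrightarrow>
      stokes_circle (snd (Q ! i)) = stokes_circle (snd (Q ! j))"
    if "i < length Q" "j < length Q" for i j
    using that tw Q' len stokes_circle_eq_iff_slope pointed_irr_type_is_expfac[OF Q]
    by (simp add: same_twisted_slopes_def)
  then show ?thesis
    using Q Q' len by (simp add: pointed_irr_type_def)
qed

lemma compatible_if_same_twisted_slopes: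
  assumes tw: "same_twisted_slopes Q' Q" and "compatible Q"
    and Q: "\<forall>i < length Q. is_expfac (snd (Q ! i))" and Q': "\<forall>i < length Q'. is_expfac (snd (Q' ! i))"
  shows "compatible Q'"
proof -
  have len: "length Q' = length Q"
    using tw by (simp add: same_twisted_slopes_def)
  have "compatible_pair (snd (Q' ! i)) (snd (Q' ! j)) \<longleftrightarrow> compatible_pair (snd (Q ! i)) (snd (Q ! j))"
    if "i < length Q" "j < length Q" for i j
  proof -
    have twist: "slope (sigma_pow m (snd (Q' ! i)) - snd (Q' ! j)) =
        slope (sigma_pow m (snd (Q ! i)) - snd (Q ! j))" for m
      using that tw by (simp add: same_twisted_slopes_def)
    have "slope (snd (Q' ! i) - snd (Q' ! j)) = slope (snd (Q ! i) - snd (Q ! j))"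
      using twist[of 0] by simp
    with twist show ?thesis
      using that Q Q' len by (simp add: compatible_pair_iff_slope)
  qed
  then show ?thesis
    using \<open>compatible Q\<close> len by (simp add: compatible_iff_compatible_pair)
qed

lemma same_fission_datum_if_same_twisted_slopes:
  assumes tw: "same_twisted_slopes Q' Q" and "\<forall>i < length Q. fst (Q' ! i) = fst (Q ! i)"
    and Q: "pointed_irr_type Q" "compatible Q" and Q': "pointed_irr_type Q'" "compatible Q'"
  shows "same_fission_datum Q' Q"
proof -
  have len: "length Q' = length Q"
    using tw by (simp add: same_twisted_slopes_def)
  have twist: "slope (sigma_pow m (snd (Q' ! i)) - snd (Q' ! j)) =
      slope (sigma_pow m (snd (Q ! i)) - snd (Q ! j))" if "i < length Q" "j < length Q" for i j m
    using that tw by (simp add: same_twisted_slopes_def)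
  have "Levels (snd (Q' ! i)) = Levels (snd (Q ! i))" if "i < length Q" for i
    using twist[OF that that] by (simp add: Levels_def slope_diff_commute)
  moreover have "fission_exp (snd (Q' ! i)) (snd (Q' ! j)) = fission_exp (snd (Q ! i)) (snd (Q ! j))"
    if "i < length Q" "j < length Q" for i j
    using that twist[OF that, of 0] len
    by (simp add: fission_exp_compatible pointed_irr_type_is_expfac compatible_compatible_pair Q Q')
  ultimately show ?thesis
    using assms(2) len by (simp add: same_fission_datum_def)
qed

lemma same_twisted_slopes_if_same_fission_datum:
  assumes fd: "same_fission_datum Q' Q"
    and Q: "pointed_irr_type Q" "compatible Q" and Q': "pointed_irr_type Q'" "compatible Q'"
  shows "same_twisted_slopes Q' Q"
  unfolding same_twisted_slopes_def
proof (intro conjI allI impI)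
  show len: "length Q' = length Q"
    using fd by (simp add: same_fission_datum_def)
  fix i j m
  assume i: "i < length Q" and j: "j < length Q"
  have "slope (snd (Q' ! i) - sigma_pow m (snd (Q' ! i))) = slope (snd (Q ! i) - sigma_pow m (snd (Q ! i)))"
    using fd i len slope_diff_sigma_pow_eq_if_Levels_eq pointed_irr_type_is_expfac[OF Q(1)]
      pointed_irr_type_is_expfac[OF Q'(1)]
    by (simp add: same_fission_datum_def)
  moreover have "slope (snd (Q' ! i) - snd (Q' ! j)) = slope (snd (Q ! i) - snd (Q ! j))"
  proof (cases "i = j")
    case False
    then show ?thesis
      using fd i j len
      by (simp add: same_fission_datum_def fission_exp_compatible[symmetric]
          pointed_irr_type_is_expfac compatible_compatible_pair Q Q')
  qed simp
  ultimately show "slope (sigma_pow m (snd (Q' ! i)) - snd (Q' ! j)) = slope (sigma_pow m (snd (Q ! i)) - snd (Q ! j))"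
    using i j len
    by (simp add: slope_sigma_pow_diff_compatible pointed_irr_type_is_expfac compatible_compatible_pair Q Q')
qed

theorem mainTheorem7:
  fixes Q Q' :: "(nat \<times> expfac) list"
  assumes "pointed_irr_type Q" and "compatible Q"
    and "\<forall>i < length Q'. fst (Q' ! i) > 0 \<and> is_expfac (snd (Q' ! i))"
  shows "sim_irr Q' Q \<longleftrightarrow>
           (pointed_irr_type Q' \<and> compatible Q' \<and> same_fission_datum Q' Q)"
proof
  have expfacs: "\<forall>i < length Q. is_expfac (snd (Q ! i))" "\<forall>i < length Q'. is_expfac (snd (Q' ! i))"
    using assms(1,3) by (simp_all add: pointed_irr_type_def)
  assume sim: "sim_irr Q' Q"
  then have tw: "same_twisted_slopes Q' Q"
    using expfacs by (rule same_twisted_slopes_if_sim_irr)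
  have "pointed_irr_type Q'"
    using tw assms(1,3) by (rule pointed_irr_type_if_same_twisted_slopes)
  moreover have "compatible Q'"
    using tw assms(2) expfacs by (rule compatible_if_same_twisted_slopes)
  moreover have "\<forall>i < length Q. fst (Q' ! i) = fst (Q ! i)"
    using sim by (simp add: sim_irr_def)
  ultimately show "pointed_irr_type Q' \<and> compatible Q' \<and> same_fission_datum Q' Q"
    using same_fission_datum_if_same_twisted_slopes[OF tw _ assms(1,2)] by blast
next
  assume Q': "pointed_irr_type Q' \<and> compatible Q' \<and> same_fission_datum Q' Q"
  then have "same_twisted_slopes Q' Q"
    using same_twisted_slopes_if_same_fission_datum assms(1,2) by blast
  moreover have "\<forall>i < length Q. fst (Q' ! i) = fst (Q ! i)"
    using Q' by (simp add: same_fission_datum_def)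
  ultimately show "sim_irr Q' Q"
    by (rule sim_irr_if_same_twisted_slopes)
qed

end
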